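(* Let $\Omega$ be a domain in $\mathbb C^n$ and let $f=u+iv$ be holomorphic on $\Omega$ with $u,v$ real-valued. Then for $1<p\le2$ and $\tau>0$, the function $$\frac{p}{p-1}(u^2+\tau)^{p/2}-(|f|^2+\tau)^{p/2}$$ is plurisubharmonic on $\Omega$. *)

theory Defs
  imports "HOL-Analysis.Analysis"
begin

text \<open>Points of C^n are vectors of type complex^'n, 'n a finite index type (n = CARD('n)).
  Complex scalar multiplication on complex^'n is (*s).\<close>

definition domain_cn :: "(complex ^ 'n::finite) set \<Rightarrow> bool" where
  "domain_cn \<Omega> \<longleftrightarrow> open \<Omega> \<and> connected \<Omega> \<and> \<Omega> \<noteq> {}"

definition holomorphic_on_cn :: "(complex ^ 'n::finite \<Rightarrow> complex) \<Rightarrow> (complex ^ 'n) set \<Rightarrow> bool" where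
  "holomorphic_on_cn f \<Omega> \<longleftrightarrow>
     (\<forall>z\<in>\<Omega>. \<exists>c :: complex ^ 'n. (f has_derivative (\<lambda>h. \<Sum>i\<in>UNIV. c $ i * h $ i)) (at z))"

definition usc_on :: "(complex ^ 'n::finite) set \<Rightarrow> (complex ^ 'n \<Rightarrow> real) \<Rightarrow> bool" where
  "usc_on \<Omega> \<phi> \<longleftrightarrow> (\<forall>z\<in>\<Omega>. \<forall>e>0. \<forall>\<^sub>F x in at z within \<Omega>. \<phi> x < \<phi> z + e)"

text \<open>Plurisubharmonic (real-valued): upper semicontinuous, and the restriction to every
  complex line is subharmonic, i.e. satisfies the sub-mean-value inequality on every closed
  disc {a + \<zeta> b : |\<zeta>| \<le> 1} contained in \<Omega>.\<close>
definition plurisubharmonic_on :: "(complex ^ 'n::finite) set \<Rightarrow> (complex ^ 'n \<Rightarrow> real) \<Rightarrow> bool" where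
  "plurisubharmonic_on \<Omega> \<phi> \<longleftrightarrow>
     usc_on \<Omega> \<phi> \<and>
     (\<forall>a b. (\<forall>\<zeta>. cmod \<zeta> \<le> 1 \<longrightarrow> a + \<zeta> *s b \<in> \<Omega>) \<longrightarrow>
        (\<lambda>t. \<phi> (a + cis t *s b)) integrable_on {0..2*pi} \<and>
        \<phi> a \<le> (1 / (2*pi)) * integral {0..2*pi} (\<lambda>t. \<phi> (a + cis t *s b)))"

end

theory Submission
  imports Defs "HOL-Complex_Analysis.Cauchy_Integral_Formula"
begin

text \<open>If \<open>G\<close> is a \<open>C\<^sup>2\<close> function on \<open>\<complex> = \<real>\<^sup>2\<close> with \<open>\<Delta>G \<ge> 0\<close> and \<open>h\<close> is holomorphic, then
  \<open>G \<circ> h\<close> satisfies the sub-mean-value inequality on every disc, since \<open>\<Delta>(G \<circ> h) = |h'|\<^sup>2 \<Delta>G\<close>.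
  We verify this in polar coordinates: writing \<open>P(r, t) = G (h (r e\<^sup>i\<^sup>t))\<close>, the identity
  \<open>r \<partial>\<^sub>r(r \<partial>\<^sub>r P) + \<partial>\<^sub>t\<^sup>2 P = r\<^sup>2 |h'|\<^sup>2 \<Delta>G \<ge> 0\<close> and periodicity in \<open>t\<close> show that the circle
  averages of \<open>P\<close> increase with \<open>r\<close>. Restricting to complex lines gives plurisubharmonicity of
  \<open>G \<circ> f\<close> for holomorphic \<open>f\<close> on \<open>\<complex>\<^sup>n\<close>.

  For \<open>G w = c ((Re w)\<^sup>2 + \<tau>)\<^bsup>p/2\<^esup> - (|w|\<^sup>2 + \<tau>)\<^bsup>p/2\<^esup>\<close>, with \<open>X = (Re w)\<^sup>2 + \<tau> \<le> Y = |w|\<^sup>2 + \<tau>\<close>,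
  \<open>\<Delta>G = p (c (p - 1) X\<^bsup>p/2-1\<^esup> - p Y\<^bsup>p/2-1\<^esup>) + p (2 - p) \<tau> (c X\<^bsup>p/2-2\<^esup> - Y\<^bsup>p/2-2\<^esup>)\<close>,
  which is nonnegative for \<open>1 < p \<le> 2\<close> and \<open>c = p/(p - 1)\<close> because both exponents are \<open>\<le> 0\<close>.\<close>

section \<open>Sub-mean-value inequality in polar coordinates\<close>

lemma integrable_on_slice:
  fixes F :: "'a::topological_space \<Rightarrow> real \<Rightarrow> real"
  assumes "continuous_on (A \<times> {c..d}) (\<lambda>(r, t). F r t)" "r \<in> A"
  shows "F r integrable_on {c..d}"
proof -
  have "continuous_on {c..d} ((\<lambda>(r, t). F r t) \<circ> Pair r)"
    by (intro continuous_on_compose continuous_intros continuous_on_subset[OF assms(1)])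
       (use assms(2) in auto)
  then have "continuous_on {c..d} (F r)"
    by (simp add: o_def)
  then show ?thesis
    by (rule integrable_continuous_interval)
qed

lemma has_real_derivative_integral_param:
  fixes F F' :: "real \<Rightarrow> real \<Rightarrow> real"
  assumes "\<And>r t. r \<in> {a..b} \<Longrightarrow> t \<in> {c..d} \<Longrightarrow>
      ((\<lambda>r. F r t) has_real_derivative F' r t) (at r within {a..b})"
    and "continuous_on ({a..b} \<times> {c..d}) (\<lambda>(r, t). F r t)"
    and "continuous_on ({a..b} \<times> {c..d}) (\<lambda>(r, t). F' r t)"
    and "r \<in> {a..b}"
  shows "((\<lambda>r. integral {c..d} (F r)) has_real_derivative integral {c..d} (F' r))
           (at r within {a..b})"
  using leibniz_rule_field_derivative[of "{a..b}" c d F F' r] assms integrable_on_slice[OF assms(2)]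
  by auto

lemma nonneg_derivative_imp_le:
  fixes f f' :: "real \<Rightarrow> real"
  assumes "a \<le> b"
    and "\<And>x. x \<in> {a..b} \<Longrightarrow> (f has_real_derivative f' x) (at x within {a..b})"
    and "\<And>x. a < x \<Longrightarrow> x < b \<Longrightarrow> 0 \<le> f' x"
  shows "f a \<le> f b"
proof (rule DERIV_nonneg_imp_increasing_open[OF assms(1)])
  fix x assume "a < x" "x < b"
  then have "at x within {a..b} = at x"
    by (intro at_within_Icc_at) auto
  with assms(2,3) \<open>a < x\<close> \<open>x < b\<close> show "\<exists>y. DERIV f x :> y \<and> 0 \<le> y"
    by (metis atLeastAtMost_iff less_imp_le)
next
  show "continuous_on {a..b} f"
    using assms(2) DERIV_continuous continuous_on_eq_continuous_within by blast
qed

lemma integral_nonneg_up_to_periodic_derivative: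
  fixes f g g' :: "real \<Rightarrow> real"
  assumes "a \<le> b"
    and "\<And>t. t \<in> {a..b} \<Longrightarrow> (g has_real_derivative g' t) (at t within {a..b})"
    and "g a = g b" and "f integrable_on {a..b}"
    and "\<And>t. t \<in> {a..b} \<Longrightarrow> 0 \<le> f t + g' t"
  shows "0 \<le> integral {a..b} f"
proof -
  have "(g' has_integral g b - g a) {a..b}"
    using assms(1,2) by (intro fundamental_theorem_of_calculus)
      (auto simp: has_real_derivative_iff_has_vector_derivative[symmetric])
  then have "((\<lambda>t. f t + g' t) has_integral integral {a..b} f + 0) {a..b}"
    using assms(3,4) by (intro has_integral_add integrable_integral) simp_all
  then have "0 \<le> integral {a..b} f + 0"
    by (rule has_integral_nonneg) (use assms(5) in auto)
  then show ?thesis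
    by simp
qed

text \<open>In polar coordinates, \<open>r * D + Ptt\<close> is \<open>r\<^sup>2\<close> times the Laplacian of \<open>P\<close>: with the circle
  average \<open>M r\<close> of \<open>P r\<close>, the function \<open>r * M' r\<close> is nondecreasing from \<open>0\<close>, because
  \<open>Ptt\<close> integrates to zero over a period, and hence \<open>M\<close> is nondecreasing.\<close>
lemma sub_mean_value_polar:
  fixes P Pr D Pt Ptt :: "real \<Rightarrow> real \<Rightarrow> real"
  defines "R \<equiv> {0..1} \<times> {0..2*pi}"
  assumes P_r: "\<And>r t. r \<in> {0..1} \<Longrightarrow> t \<in> {0..2*pi} \<Longrightarrow>
      ((\<lambda>r. P r t) has_real_derivative Pr r t) (at r within {0..1})"
    and D_r: "\<And>r t. r \<in> {0..1} \<Longrightarrow> t \<in> {0..2*pi} \<Longrightarrow>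
      ((\<lambda>r. r * Pr r t) has_real_derivative D r t) (at r within {0..1})"
    and Pt_t: "\<And>r t. r \<in> {0..1} \<Longrightarrow> t \<in> {0..2*pi} \<Longrightarrow>
      ((\<lambda>t. Pt r t) has_real_derivative Ptt r t) (at t within {0..2*pi})"
    and Pt_periodic: "\<And>r. r \<in> {0..1} \<Longrightarrow> Pt r 0 = Pt r (2*pi)"
    and cont: "continuous_on R (\<lambda>(r, t). P r t)" "continuous_on R (\<lambda>(r, t). Pr r t)"
      "continuous_on R (\<lambda>(r, t). D r t)"
    and laplacian_nonneg: "\<And>r t. r \<in> {0<..1} \<Longrightarrow> t \<in> {0..2*pi} \<Longrightarrow> 0 \<le> r * D r t + Ptt r t"
    and P_centre: "\<And>t. P 0 t = P 0 0"
  shows "2*pi * P 0 0 \<le> integral {0..2*pi} (P 1)"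
proof -
  define M where "M r = integral {0..2*pi} (P r)" for r
  define N where "N r = integral {0..2*pi} (\<lambda>t. r * Pr r t)" for r
  have "continuous_on R (\<lambda>x. fst x * (\<lambda>(r, t). Pr r t) x)"
    by (intro continuous_intros cont(2))
  then have N_deriv: "(N has_real_derivative integral {0..2*pi} (D r)) (at r within {0..1})"
    if "r \<in> {0..1}" for r
    unfolding N_def using that D_r cont(3)
    by (intro has_real_derivative_integral_param) (auto simp: R_def case_prod_beta')
  have M_deriv: "(M has_real_derivative integral {0..2*pi} (Pr r)) (at r within {0..1})"
    if "r \<in> {0..1}" for r
    unfolding M_def using that P_r cont(1,2)
    by (intro has_real_derivative_integral_param) (auto simp: R_def)
  have D_nonneg: "0 \<le> integral {0..2*pi} (D r)" if r: "r \<in> {0<..1}" for r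
  proof -
    have "0 \<le> integral {0..2*pi} (\<lambda>t. r * D r t)"
      using r Pt_t Pt_periodic laplacian_nonneg integrable_on_slice[OF cont(3)[unfolded R_def], of r]
      by (intro integral_nonneg_up_to_periodic_derivative[where g = "Pt r" and g' = "Ptt r"])
        (auto intro: integrable_on_cmult_left)
    with r show ?thesis
      by (simp add: zero_le_mult_iff)
  qed
  have N_mono: "N 0 \<le> N r" if r: "r \<in> {0..1}" for r
  proof (rule nonneg_derivative_imp_le[where f = N and f' = "\<lambda>r. integral {0..2*pi} (D r)"])
    show "(N has_real_derivative integral {0..2*pi} (D x)) (at x within {0..r})"
      if "x \<in> {0..r}" for x
      using N_deriv[of x] that r by (auto intro: DERIV_subset)
  qed (use r D_nonneg in auto)
  have Pr_nonneg: "0 \<le> integral {0..2*pi} (Pr r)" if r: "r \<in> {0<..1}" for r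
    using N_mono[of r] r by (simp add: N_def zero_le_mult_iff)
  have "M 0 \<le> M 1"
    by (rule nonneg_derivative_imp_le[where f' = "\<lambda>r. integral {0..2*pi} (Pr r)"])
      (simp_all add: M_deriv Pr_nonneg)
  moreover have "M 0 = integral {0..2*pi} (\<lambda>t. P 0 0)"
    unfolding M_def by (rule integral_cong) (rule P_centre)
  ultimately show ?thesis
    by (simp add: M_def)
qed

section \<open>Composition with holomorphic maps\<close>

lemma has_real_derivative_Re:
  "(g has_vector_derivative g') (at x within S) \<Longrightarrow>
     ((\<lambda>x. Re (g x)) has_real_derivative Re g') (at x within S)"
  using bounded_linear.has_vector_derivative[OF bounded_linear_Re]
  by (simp add: has_real_derivative_iff_has_vector_derivative)

lemma has_real_derivative_Im:
  "(g has_vector_derivative g') (at x within S) \<Longrightarrow>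
     ((\<lambda>x. Im (g x)) has_real_derivative Im g') (at x within S)"
  using bounded_linear.has_vector_derivative[OF bounded_linear_Im]
  by (simp add: has_real_derivative_iff_has_vector_derivative)

lemma has_real_derivative_comp_gradient:
  fixes F Fu Fv :: "complex \<Rightarrow> real"
  assumes "\<And>w. (F has_derivative (\<lambda>k. Fu w * Re k + Fv w * Im k)) (at w)"
    and "(\<gamma> has_vector_derivative \<gamma>') (at x within S)"
  shows "((\<lambda>x. F (\<gamma> x)) has_real_derivative Fu (\<gamma> x) * Re \<gamma>' + Fv (\<gamma> x) * Im \<gamma>') (at x within S)"
  unfolding has_field_derivative_def
  using has_derivative_compose[OF assms(2)[unfolded has_vector_derivative_def] assms(1)]
  by (rule has_derivative_eq_rhs) (auto simp: algebra_simps)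

lemma has_vector_derivative_along_ray:
  assumes "(g has_field_derivative g') (at (of_real r * e))"
  shows "((\<lambda>r. g (of_real r * e)) has_vector_derivative e * g') (at r within S)"
proof -
  have "((\<lambda>r. of_real r * e) has_vector_derivative e) (at r within S)"
    by (auto intro!: derivative_eq_intros simp: has_real_derivative_iff_has_vector_derivative[symmetric])
  from field_vector_diff_chain_within[OF this has_field_derivative_at_within[OF assms]]
  show ?thesis by (simp add: o_def)
qed

lemma has_vector_derivative_along_circle:
  assumes "(g has_field_derivative g') (at (of_real r * cis t))"
  shows "((\<lambda>t. g (of_real r * cis t)) has_vector_derivative \<i> * of_real r * cis t * g') (at t within S)"
proof -
  have "((\<lambda>w. of_real r * exp (\<i> * w)) has_field_derivative \<i> * of_real r * cis t) (at (of_real t))"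
    by (auto intro!: derivative_eq_intros simp: cis_conv_exp)
  from has_vector_derivative_real_field[OF this]
  have "((\<lambda>t. of_real r * cis t) has_vector_derivative \<i> * of_real r * cis t) (at t within S)"
    by (simp add: cis_conv_exp)
  from field_vector_diff_chain_within[OF this has_field_derivative_at_within[OF assms]]
  show ?thesis by (simp add: o_def)
qed

lemma continuous_on_polar_comp_holomorphic:
  assumes "g holomorphic_on V" and "cball 0 1 \<subseteq> V"
  shows "continuous_on ({0..1} \<times> {0..2*pi}) (\<lambda>x. g (of_real (fst x) * cis (snd x)))"
proof (rule continuous_on_compose2[OF holomorphic_on_imp_continuous_on[OF assms(1)]])
  show "continuous_on ({0..1} \<times> {0..2*pi}) (\<lambda>x. of_real (fst x) * cis (snd x))"
    by (intro continuous_intros)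
qed (use assms(2) in \<open>auto simp: norm_mult\<close>)

lemma holomorphic_on_cn_imp_continuous_on:
  "holomorphic_on_cn f \<Omega> \<Longrightarrow> continuous_on \<Omega> f"
  unfolding holomorphic_on_cn_def
  by (meson continuous_at_imp_continuous_on has_derivative_continuous)

lemma continuous_on_imp_usc_on:
  assumes "continuous_on \<Omega> \<phi>"
  shows "usc_on \<Omega> \<phi>"
  unfolding usc_on_def
proof (intro ballI allI impI)
  fix z and e :: real
  assume "z \<in> \<Omega>" "0 < e"
  then show "\<forall>\<^sub>F x in at z within \<Omega>. \<phi> x < \<phi> z + e"
    using assms by (intro order_tendstoD(2)) (auto simp: continuous_on_def)
qed

lemma has_derivative_complex_line:
  fixes a b :: "complex ^ 'n::finite"
  shows "((\<lambda>\<zeta>. a + \<zeta> *s b) has_derivative (\<lambda>k. k *s b)) (at \<zeta>)"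
proof -
  have "bounded_linear (\<lambda>k::complex. k *s b)"
    by (auto intro!: linearI simp: linear_conv_bounded_linear[symmetric] vec_eq_iff vector_sadd_rdistrib)
  then show ?thesis
    by (auto intro!: derivative_eq_intros bounded_linear_imp_has_derivative)
qed

lemma open_complex_line_preimage:
  fixes a b :: "complex ^ 'n::finite"
  assumes "open \<Omega>"
  shows "open {\<zeta>. a + \<zeta> *s b \<in> \<Omega>}"
proof -
  have "isCont (\<lambda>\<zeta>. a + \<zeta> *s b) \<zeta>" for \<zeta>
    using has_derivative_continuous[OF has_derivative_complex_line] .
  from continuous_open_vimage[OF assms this] show ?thesis
    by (simp add: vimage_def)
qed

lemma holomorphic_on_complex_line:
  assumes "holomorphic_on_cn f \<Omega>"
  shows "(\<lambda>\<zeta>. f (a + \<zeta> *s b)) holomorphic_on {\<zeta>. a + \<zeta> *s b \<in> \<Omega>}"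
  unfolding holomorphic_on_def field_differentiable_def
proof (intro ballI)
  fix \<zeta> assume "\<zeta> \<in> {\<zeta>. a + \<zeta> *s b \<in> \<Omega>}"
  then obtain c where c: "(f has_derivative (\<lambda>h. \<Sum>i\<in>UNIV. c $ i * h $ i)) (at (a + \<zeta> *s b))"
    using assms by (auto simp: holomorphic_on_cn_def)
  have "((\<lambda>\<zeta>. f (a + \<zeta> *s b)) has_derivative (\<lambda>k. \<Sum>i\<in>UNIV. c $ i * (k *s b) $ i)) (at \<zeta>)"
    using has_derivative_compose[OF has_derivative_complex_line c] .
  moreover have "(\<lambda>k. \<Sum>i\<in>UNIV. c $ i * (k *s b) $ i) = (*) (\<Sum>i\<in>UNIV. c $ i * b $ i)"
    by (auto simp: sum_distrib_left algebra_simps)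
  ultimately have "((\<lambda>\<zeta>. f (a + \<zeta> *s b)) has_field_derivative (\<Sum>i\<in>UNIV. c $ i * b $ i)) (at \<zeta>)"
    by (simp add: has_field_derivative_def)
  then show "\<exists>f'. ((\<lambda>\<zeta>. f (a + \<zeta> *s b)) has_field_derivative f') (at \<zeta> within {\<zeta>. a + \<zeta> *s b \<in> \<Omega>})"
    by (blast intro: has_field_derivative_at_within)
qed

locale C2_subharmonic =
  fixes G Gu Gv Guu Guv Gvv :: "complex \<Rightarrow> real"
  assumes G_deriv: "\<And>w. (G has_derivative (\<lambda>k. Gu w * Re k + Gv w * Im k)) (at w)"
    and Gu_deriv: "\<And>w. (Gu has_derivative (\<lambda>k. Guu w * Re k + Guv w * Im k)) (at w)"
    and Gv_deriv: "\<And>w. (Gv has_derivative (\<lambda>k. Guv w * Re k + Gvv w * Im k)) (at w)"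
    and continuous_second_partials:
      "continuous_on UNIV Guu" "continuous_on UNIV Guv" "continuous_on UNIV Gvv"
    and laplacian_nonneg: "\<And>w. 0 \<le> Guu w + Gvv w"
begin

definition directional_deriv :: "complex \<Rightarrow> complex \<Rightarrow> real" where
  "directional_deriv w k = Gu w * Re k + Gv w * Im k"

definition directional_deriv2 :: "complex \<Rightarrow> complex \<Rightarrow> real" where
  "directional_deriv2 w k = Guu w * (Re k)\<^sup>2 + 2 * Guv w * Re k * Im k + Gvv w * (Im k)\<^sup>2"

lemma continuous_on_partials: "continuous_on UNIV G" "continuous_on UNIV Gu" "continuous_on UNIV Gv"
  using G_deriv Gu_deriv Gv_deriv
  by (meson continuous_at_imp_continuous_on has_derivative_continuous)+

lemma continuous_on_comp_partials [continuous_intros]: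
  assumes "continuous_on S f"
  shows "continuous_on S (\<lambda>x. G (f x))" "continuous_on S (\<lambda>x. Gu (f x))"
    "continuous_on S (\<lambda>x. Gv (f x))" "continuous_on S (\<lambda>x. Guu (f x))"
    "continuous_on S (\<lambda>x. Guv (f x))" "continuous_on S (\<lambda>x. Gvv (f x))"
  using continuous_on_partials continuous_second_partials
  by (auto intro: continuous_on_compose2[OF _ assms])

lemma has_real_derivative_comp:
  "(\<gamma> has_vector_derivative \<gamma>') (at x within S) \<Longrightarrow>
     ((\<lambda>x. G (\<gamma> x)) has_real_derivative directional_deriv (\<gamma> x) \<gamma>') (at x within S)"
  unfolding directional_deriv_def by (rule has_real_derivative_comp_gradient[OF G_deriv])

lemma has_real_derivative_directional_deriv_comp:
  assumes "(\<gamma> has_vector_derivative \<gamma>' x) (at x within S)"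
    and "(\<gamma>' has_vector_derivative \<gamma>'') (at x within S)"
  shows "((\<lambda>x. directional_deriv (\<gamma> x) (\<gamma>' x)) has_real_derivative
           directional_deriv2 (\<gamma> x) (\<gamma>' x) + directional_deriv (\<gamma> x) \<gamma>'') (at x within S)"
proof -
  note Gu' = has_real_derivative_comp_gradient[OF Gu_deriv assms(1)]
  note Gv' = has_real_derivative_comp_gradient[OF Gv_deriv assms(1)]
  note Re' = has_real_derivative_Re[OF assms(2)] and Im' = has_real_derivative_Im[OF assms(2)]
  show ?thesis
    unfolding directional_deriv_def
    by (rule DERIV_cong[OF DERIV_add[OF DERIV_mult'[OF Gu' Re'] DERIV_mult'[OF Gv' Im']]])
      (simp add: directional_deriv2_def directional_deriv_def power2_eq_square algebra_simps)
qed

lemma polar_laplacian: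
  "r * (directional_deriv w k + r * (directional_deriv2 w k + directional_deriv w l))
     + (directional_deriv2 w (\<i> * of_real r * k)
        + directional_deriv w (- of_real r * k - of_real (r\<^sup>2) * l))
   = r\<^sup>2 * (cmod k)\<^sup>2 * (Guu w + Gvv w)"
  unfolding cmod_power2 directional_deriv_def directional_deriv2_def
  by (simp add: algebra_simps power2_eq_square)

text \<open>The hypotheses on the angular derivatives are the Cauchy--Riemann equations in polar
  coordinates, \<open>\<partial>\<^sub>t H = \<i> r \<partial>\<^sub>r H\<close>, and their consequence for \<open>\<partial>\<^sub>t\<^sup>2 H\<close>.\<close>
lemma sub_mean_value_polar_comp:
  fixes H W1 W2 :: "real \<Rightarrow> real \<Rightarrow> complex"
  defines "R \<equiv> {0..1} \<times> {0..2*pi}"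
  assumes H_r: "\<And>r t. r \<in> {0..1} \<Longrightarrow> ((\<lambda>r. H r t) has_vector_derivative W1 r t) (at r within {0..1})"
    and W1_r: "\<And>r t. r \<in> {0..1} \<Longrightarrow> ((\<lambda>r. W1 r t) has_vector_derivative W2 r t) (at r within {0..1})"
    and H_t: "\<And>r t. r \<in> {0..1} \<Longrightarrow>
      ((\<lambda>t. H r t) has_vector_derivative \<i> * of_real r * W1 r t) (at t within {0..2*pi})"
    and W1_t: "\<And>r t. r \<in> {0..1} \<Longrightarrow>
      ((\<lambda>t. \<i> * of_real r * W1 r t) has_vector_derivative - of_real r * W1 r t - of_real (r\<^sup>2) * W2 r t)
        (at t within {0..2*pi})"
    and periodic: "\<And>r. H r 0 = H r (2*pi)" "\<And>r. W1 r 0 = W1 r (2*pi)"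
    and centre: "\<And>t. H 0 t = H 0 0"
    and cont: "continuous_on R (\<lambda>(r, t). H r t)" "continuous_on R (\<lambda>(r, t). W1 r t)"
      "continuous_on R (\<lambda>(r, t). W2 r t)"
  shows "2*pi * G (H 0 0) \<le> integral {0..2*pi} (\<lambda>t. G (H 1 t))"
proof -
  define Pr where "Pr r t = directional_deriv (H r t) (W1 r t)" for r t
  define D where "D r t = Pr r t + r * (directional_deriv2 (H r t) (W1 r t)
                                        + directional_deriv (H r t) (W2 r t))" for r t
  define Pt where "Pt r t = directional_deriv (H r t) (\<i> * of_real r * W1 r t)" for r t
  define Ptt where "Ptt r t = directional_deriv2 (H r t) (\<i> * of_real r * W1 r t)
      + directional_deriv (H r t) (- of_real r * W1 r t - of_real (r\<^sup>2) * W2 r t)" for r t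
  have P_r: "((\<lambda>r. G (H r t)) has_real_derivative Pr r t) (at r within {0..1})"
    if "r \<in> {0..1}" for r t
    unfolding Pr_def by (rule has_real_derivative_comp[OF H_r[OF that]])
  have D_r: "((\<lambda>r. r * Pr r t) has_real_derivative D r t) (at r within {0..1})"
    if "r \<in> {0..1}" for r t
    unfolding Pr_def
    by (rule DERIV_cong[OF DERIV_mult'[OF DERIV_ident
          has_real_derivative_directional_deriv_comp[OF H_r[OF that] W1_r[OF that]]]])
      (simp add: D_def Pr_def)
  have Pt_t: "((\<lambda>t. Pt r t) has_real_derivative Ptt r t) (at t within {0..2*pi})"
    if "r \<in> {0..1}" for r t
    unfolding Pt_def Ptt_def
    by (rule has_real_derivative_directional_deriv_comp[OF H_t[OF that] W1_t[OF that]])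
  have polar_laplacian_nonneg: "0 \<le> r * D r t + Ptt r t" for r t
    unfolding D_def Pr_def Ptt_def polar_laplacian using laplacian_nonneg by simp
  have cont_P: "continuous_on R (\<lambda>(r, t). G (H r t))" "continuous_on R (\<lambda>(r, t). Pr r t)"
    "continuous_on R (\<lambda>(r, t). D r t)"
    unfolding case_prod_beta' Pr_def D_def directional_deriv_def directional_deriv2_def
    by (intro continuous_intros cont[unfolded case_prod_beta'])+
  have Pt_periodic: "Pt r 0 = Pt r (2*pi)" for r
    unfolding Pt_def using periodic by simp
  have P_centre: "G (H 0 t) = G (H 0 0)" for t
    using centre[of t] by simp
  show ?thesis
    by (rule sub_mean_value_polar[OF P_r D_r Pt_t Pt_periodic cont_P[unfolded R_def]
          polar_laplacian_nonneg P_centre])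
qed

lemma sub_mean_value_holomorphic:
  assumes hol: "h holomorphic_on V" and V: "open V" "cball 0 1 \<subseteq> V"
  shows "2*pi * G (h 0) \<le> integral {0..2*pi} (\<lambda>t. G (h (cis t)))"
proof -
  define h1 where "h1 = deriv h"
  define h2 where "h2 = deriv h1"
  have hol1: "h1 holomorphic_on V" and hol2: "h2 holomorphic_on V"
    using hol V(1) by (simp_all add: h1_def h2_def holomorphic_deriv)
  define Z where "Z r t = complex_of_real r * cis t" for r t
  have Z_in_V: "Z r t \<in> V" if "r \<in> {0..1}" for r t
    using V(2) that by (auto simp: Z_def norm_mult)
  have h_deriv: "(h has_field_derivative h1 (Z r t)) (at (Z r t))"
    "(h1 has_field_derivative h2 (Z r t)) (at (Z r t))"
    if "r \<in> {0..1}" for r t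
    using holomorphic_derivI[OF hol V(1) Z_in_V[OF that]] holomorphic_derivI[OF hol1 V(1) Z_in_V[OF that]]
    by (simp_all add: h1_def h2_def)
  define W1 where "W1 r t = cis t * h1 (Z r t)" for r t
  define W2 where "W2 r t = cis t * (cis t * h2 (Z r t))" for r t
  have "2*pi * G (h (Z 0 0)) \<le> integral {0..2*pi} (\<lambda>t. G (h (Z 1 t)))"
  proof (rule sub_mean_value_polar_comp)
    fix r t :: real assume r: "r \<in> {0..1}"
    show "((\<lambda>r. h (Z r t)) has_vector_derivative W1 r t) (at r within {0..1})"
      using has_vector_derivative_along_ray[OF h_deriv(1)[OF r, unfolded Z_def]]
      by (simp add: W1_def Z_def)
    show "((\<lambda>r. W1 r t) has_vector_derivative W2 r t) (at r within {0..1})"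
      using has_vector_derivative_along_ray[OF DERIV_cmult[OF h_deriv(2)[OF r], of "cis t", unfolded Z_def]]
      by (simp add: W1_def W2_def Z_def)
    show "((\<lambda>t. h (Z r t)) has_vector_derivative \<i> * of_real r * W1 r t) (at t within {0..2*pi})"
      using has_vector_derivative_along_circle[OF h_deriv(1)[OF r, unfolded Z_def]]
      by (simp add: W1_def Z_def algebra_simps)
    have "((\<lambda>z. \<i> * z * h1 z) has_field_derivative \<i> * h1 (Z r t) + \<i> * Z r t * h2 (Z r t)) (at (Z r t))"
      using h_deriv(2)[OF r] by (auto intro!: derivative_eq_intros simp: algebra_simps)
    from has_vector_derivative_along_circle[OF this[unfolded Z_def]]
    show "((\<lambda>t. \<i> * of_real r * W1 r t) has_vector_derivative
        - of_real r * W1 r t - of_real (r\<^sup>2) * W2 r t) (at t within {0..2*pi})"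
      by (simp add: W1_def W2_def Z_def algebra_simps power2_eq_square)
  next
    note [continuous_intros] = continuous_on_polar_comp_holomorphic[OF _ V(2)]
    show "continuous_on ({0..1} \<times> {0..2*pi}) (\<lambda>(r, t). h (Z r t))"
      "continuous_on ({0..1} \<times> {0..2*pi}) (\<lambda>(r, t). W1 r t)"
      "continuous_on ({0..1} \<times> {0..2*pi}) (\<lambda>(r, t). W2 r t)"
      unfolding case_prod_beta' W1_def W2_def Z_def
      by (intro continuous_intros hol hol1 hol2)+
  qed (simp_all add: Z_def W1_def)
  then show ?thesis
    by (simp add: Z_def)
qed

lemma plurisubharmonic_on_comp_holomorphic:
  assumes \<Omega>: "open \<Omega>" and f: "holomorphic_on_cn f \<Omega>"
  shows "plurisubharmonic_on \<Omega> (\<lambda>z. G (f z))"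
proof -
  have "continuous_on \<Omega> (\<lambda>z. G (f z))"
    by (intro continuous_intros holomorphic_on_cn_imp_continuous_on[OF f])
  moreover have "(\<lambda>t. G (f (a + cis t *s b))) integrable_on {0..2*pi} \<and>
      G (f a) \<le> 1 / (2*pi) * integral {0..2*pi} (\<lambda>t. G (f (a + cis t *s b)))"
    if disc: "\<forall>\<zeta>. cmod \<zeta> \<le> 1 \<longrightarrow> a + \<zeta> *s b \<in> \<Omega>" for a b
  proof -
    define V where "V = {\<zeta>. a + \<zeta> *s b \<in> \<Omega>}"
    define h where "h \<zeta> = f (a + \<zeta> *s b)" for \<zeta>
    have hol: "h holomorphic_on V"
      unfolding h_def V_def by (rule holomorphic_on_complex_line[OF f])
    have disc_V: "cball 0 1 \<subseteq> V"
      using disc by (auto simp: V_def)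
    have "2*pi * G (h 0) \<le> integral {0..2*pi} (\<lambda>t. G (h (cis t)))"
      using sub_mean_value_holomorphic[OF hol _ disc_V] open_complex_line_preimage[OF \<Omega>]
      by (simp add: V_def)
    moreover have "continuous_on {0..2*pi} (\<lambda>t. G (h (cis t)))"
      using disc_V by (intro continuous_intros continuous_on_compose2[OF holomorphic_on_imp_continuous_on[OF hol]])
        auto
    ultimately show ?thesis
      by (auto simp: h_def field_simps integrable_continuous_interval)
  qed
  ultimately show ?thesis
    unfolding plurisubharmonic_on_def by (blast intro: continuous_on_imp_usc_on)
qed

end

lemma has_derivative_shifted_powr:
  fixes f :: "'a::real_normed_vector \<Rightarrow> real"
  assumes "(f has_derivative f') (at w)" and "0 < f w + \<tau>"
  shows "((\<lambda>w. (f w + \<tau>) powr q) has_derivative (\<lambda>k. f' k * (q * (f w + \<tau>) powr (q - 1)))) (at w)"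
  using DERIV_compose_FDERIV[OF has_real_derivative_powr[OF assms(2)]
      has_derivative_add_const[OF assms(1)]] .

definition Phi :: "real \<Rightarrow> real \<Rightarrow> real \<Rightarrow> complex \<Rightarrow> real" where
  "Phi c p \<tau> w = c * ((Re w)\<^sup>2 + \<tau>) powr (p / 2) - ((cmod w)\<^sup>2 + \<tau>) powr (p / 2)"

definition Phi_u :: "real \<Rightarrow> real \<Rightarrow> real \<Rightarrow> complex \<Rightarrow> real" where
  "Phi_u c p \<tau> w = p * (c * ((Re w)\<^sup>2 + \<tau>) powr (p/2 - 1) - ((cmod w)\<^sup>2 + \<tau>) powr (p/2 - 1)) * Re w"

definition Phi_v :: "real \<Rightarrow> real \<Rightarrow> real \<Rightarrow> complex \<Rightarrow> real" where
  "Phi_v c p \<tau> w = - p * ((cmod w)\<^sup>2 + \<tau>) powr (p/2 - 1) * Im w"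

definition Phi_uu :: "real \<Rightarrow> real \<Rightarrow> real \<Rightarrow> complex \<Rightarrow> real" where
  "Phi_uu c p \<tau> w = p * (c * ((Re w)\<^sup>2 + \<tau>) powr (p/2 - 1) - ((cmod w)\<^sup>2 + \<tau>) powr (p/2 - 1))
     + p * (p - 2) * (c * ((Re w)\<^sup>2 + \<tau>) powr (p/2 - 2) - ((cmod w)\<^sup>2 + \<tau>) powr (p/2 - 2)) * (Re w)\<^sup>2"

definition Phi_uv :: "real \<Rightarrow> real \<Rightarrow> real \<Rightarrow> complex \<Rightarrow> real" where
  "Phi_uv c p \<tau> w = - p * (p - 2) * ((cmod w)\<^sup>2 + \<tau>) powr (p/2 - 2) * Re w * Im w"

definition Phi_vv :: "real \<Rightarrow> real \<Rightarrow> real \<Rightarrow> complex \<Rightarrow> real" where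
  "Phi_vv c p \<tau> w = - p * ((cmod w)\<^sup>2 + \<tau>) powr (p/2 - 1) - p * (p - 2) * ((cmod w)\<^sup>2 + \<tau>) powr (p/2 - 2) * (Im w)\<^sup>2"

context
  fixes \<tau> :: real
  assumes \<tau>: "0 < \<tau>"
begin

lemma squares_plus_pos: "0 < (Re w)\<^sup>2 + \<tau>" "0 < (cmod w)\<^sup>2 + \<tau>"
  using \<tau> by (auto intro: add_nonneg_pos)

lemma has_derivative_Re_sq_powr:
  "((\<lambda>w. ((Re w)\<^sup>2 + \<tau>) powr q) has_derivative
     (\<lambda>k. 2 * q * ((Re w)\<^sup>2 + \<tau>) powr (q - 1) * Re w * Re k)) (at w)"
  by (rule has_derivative_eq_rhs[OF has_derivative_shifted_powr[OF
        has_derivative_power[OF has_derivative_Re[OF has_derivative_ident]]]])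
    (simp_all add: fun_eq_iff add_nonneg_pos \<tau>)

lemma has_derivative_cmod_sq_powr:
  "((\<lambda>w. ((cmod w)\<^sup>2 + \<tau>) powr q) has_derivative
     (\<lambda>k. 2 * q * ((cmod w)\<^sup>2 + \<tau>) powr (q - 1) * (Re w * Re k + Im w * Im k))) (at w)"
  unfolding cmod_power2
  by (rule has_derivative_eq_rhs[OF has_derivative_shifted_powr[OF has_derivative_add[OF
        has_derivative_power[OF has_derivative_Re[OF has_derivative_ident]]
        has_derivative_power[OF has_derivative_Im[OF has_derivative_ident]]]]])
    (simp_all add: fun_eq_iff add_pos_nonneg \<tau> algebra_simps)

lemma has_derivative_Phi:
  "(Phi c p \<tau> has_derivative (\<lambda>k. Phi_u c p \<tau> w * Re k + Phi_v c p \<tau> w * Im k)) (at w)"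
  unfolding Phi_def[abs_def]
  by (rule has_derivative_eq_rhs[OF has_derivative_diff[OF
        has_derivative_mult_right[OF has_derivative_Re_sq_powr] has_derivative_cmod_sq_powr]])
    (simp add: fun_eq_iff Phi_u_def Phi_v_def algebra_simps)

lemma has_derivative_Phi_u:
  "(Phi_u c p \<tau> has_derivative (\<lambda>k. Phi_uu c p \<tau> w * Re k + Phi_uv c p \<tau> w * Im k)) (at w)"
  unfolding Phi_u_def[abs_def]
  by (rule has_derivative_eq_rhs[OF has_derivative_mult[OF has_derivative_mult_right[OF
        has_derivative_diff[OF has_derivative_mult_right[OF has_derivative_Re_sq_powr]
          has_derivative_cmod_sq_powr]] has_derivative_Re[OF has_derivative_ident]]])
    (simp add: fun_eq_iff Phi_uu_def Phi_uv_def algebra_simps power2_eq_square)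

lemma has_derivative_Phi_v:
  "(Phi_v c p \<tau> has_derivative (\<lambda>k. Phi_uv c p \<tau> w * Re k + Phi_vv c p \<tau> w * Im k)) (at w)"
  unfolding Phi_v_def[abs_def]
  by (rule has_derivative_eq_rhs[OF has_derivative_mult[OF has_derivative_mult_right[OF
        has_derivative_cmod_sq_powr] has_derivative_Im[OF has_derivative_ident]]])
    (simp add: fun_eq_iff Phi_uv_def Phi_vv_def algebra_simps power2_eq_square)

lemma continuous_on_Phi_second_partials:
  "continuous_on UNIV (Phi_uu c p \<tau>)" "continuous_on UNIV (Phi_uv c p \<tau>)"
  "continuous_on UNIV (Phi_vv c p \<tau>)"
proof -
  have "(Re w)\<^sup>2 + \<tau> \<noteq> 0" "(cmod w)\<^sup>2 + \<tau> \<noteq> 0" for w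
    using squares_plus_pos[of w] by linarith+
  then show "continuous_on UNIV (Phi_uu c p \<tau>)" "continuous_on UNIV (Phi_uv c p \<tau>)"
    "continuous_on UNIV (Phi_vv c p \<tau>)"
    unfolding Phi_uu_def[abs_def] Phi_uv_def[abs_def] Phi_vv_def[abs_def]
    by (auto intro!: continuous_intros)
qed

lemma laplacian_Phi_nonneg:
  assumes p: "1 < p" "p \<le> 2" and c: "p \<le> c * (p - 1)"
  shows "0 \<le> Phi_uu c p \<tau> w + Phi_vv c p \<tau> w"
proof -
  define X Y where "X = (Re w)\<^sup>2 + \<tau>" and "Y = (cmod w)\<^sup>2 + \<tau>"
  have X: "0 < X" "X \<le> Y"
    using squares_plus_pos[of w] by (auto simp: X_def Y_def cmod_power2)
  then have Y: "0 < Y" by linarith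
  have split_powr: "Z powr (p/2 - 1) = Z * Z powr (p/2 - 2)" if "0 < Z" for Z :: real
    using powr_add[of Z 1 "p/2 - 2"] that by simp
  have cmod_sq: "cmod w * cmod w = Re w * Re w + Im w * Im w"
    using cmod_power2[of w] by (simp add: power2_eq_square)
  have "Phi_uu c p \<tau> w + Phi_vv c p \<tau> w
      = p * (c * (p - 1) * X powr (p/2 - 1) - p * Y powr (p/2 - 1))
        + p * (2 - p) * \<tau> * (c * X powr (p/2 - 2) - Y powr (p/2 - 2))"
    unfolding Phi_uu_def Phi_vv_def X_def[symmetric] Y_def[symmetric] split_powr[OF X(1)] split_powr[OF Y]
    by (simp add: X_def Y_def algebra_simps power2_eq_square cmod_sq)
  moreover have "p * Y powr (p/2 - 1) \<le> c * (p - 1) * X powr (p/2 - 1)"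
    using c p X by (intro mult_mono powr_mono2') auto
  moreover have "Y powr (p/2 - 2) \<le> c * X powr (p/2 - 2)"
  proof -
    have "1 \<le> c"
      using c p by (smt (verit) mult_le_cancel_right1)
    then have "X powr (p/2 - 2) \<le> c * X powr (p/2 - 2)"
      by (simp add: mult_le_cancel_right1)
    then show ?thesis
      using powr_mono2'[of "p/2 - 2" X Y] X p by linarith
  qed
  ultimately show ?thesis
    using p \<tau> by simp
qed

end

lemma C2_subharmonic_Phi:
  assumes "0 < \<tau>" "1 < p" "p \<le> 2" "p \<le> c * (p - 1)"
  shows "C2_subharmonic (Phi c p \<tau>) (Phi_u c p \<tau>) (Phi_v c p \<tau>)
           (Phi_uu c p \<tau>) (Phi_uv c p \<tau>) (Phi_vv c p \<tau>)"
  by unfold_locales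
    (simp_all add: assms has_derivative_Phi has_derivative_Phi_u has_derivative_Phi_v
      continuous_on_Phi_second_partials laplacian_Phi_nonneg)

theorem lemma2p1:
  fixes \<Omega> :: "(complex ^ 'n::finite) set"
    and f :: "complex ^ 'n \<Rightarrow> complex"
    and p \<tau> :: real
  assumes "domain_cn \<Omega>"
    and "holomorphic_on_cn f \<Omega>"
    and "1 < p" and "p \<le> 2" and "\<tau> > 0"
  shows "plurisubharmonic_on \<Omega>
           (\<lambda>z. p / (p - 1) * ((Re (f z))\<^sup>2 + \<tau>) powr (p / 2)
                 - ((cmod (f z))\<^sup>2 + \<tau>) powr (p / 2))"
proof -
  interpret C2_subharmonic "Phi (p / (p - 1)) p \<tau>" "Phi_u (p / (p - 1)) p \<tau>" "Phi_v (p / (p - 1)) p \<tau>"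
      "Phi_uu (p / (p - 1)) p \<tau>" "Phi_uv (p / (p - 1)) p \<tau>" "Phi_vv (p / (p - 1)) p \<tau>"
    using assms(3-5) by (intro C2_subharmonic_Phi) auto
  have "open \<Omega>"
    using assms(1) by (simp add: domain_cn_def)
  from plurisubharmonic_on_comp_holomorphic[OF this assms(2)] show ?thesis
    by (simp add: Phi_def)
qed

end
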